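(* Let $g(x)=(x+1)\ln(x+1)-x\ln x$ (entropy in nats of a thermal state with mean photon number $x$). For $\eta\in[1/2,1)$ and $N_S>0$ with $(1-\eta)N_S\ge 2$, \[ g(\eta N_S)-g((1-\eta)N_S)\ge \ln\eta-\ln(1-\eta)-\frac{1}{\eta(1-\eta)N_S}. \] Consequently, for $\epsilon>0$, choosing the photon-number-sharing parameter $\lambda=1/[\eta(1-\eta)\epsilon N_S\ln 2]$, whenever $\lambda(1-\eta)N_S\ge 2$ and $\eta\ge 1-\eta$, gives a quantum communication rate $g_2(\lambda\eta N_S)-g_2(\lambda(1-\eta)N_S)$ (in qubits per channel use) that is within $\epsilon$ of $\log_2\eta-\log_2(1-\eta)$, i.e. \[ g_2(\lambda\eta N_S)-g_2(\lambda(1-\eta)N_S)\ge \log_2\eta-\log_2(1-\eta)-\epsilon, \] where $g_2(x)=(x+1)\log_2(x+1)-x\log_2 x$.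
   Context: $\log_2\eta-\log_2(1-\eta)$ is the high-photon-number limit of the quantum communication rate $g_2(\eta N)-g_2((1-\eta)N)$ of a pure-loss bosonic channel with transmissivity $\eta$ and mean input photon number $N$. The photon-number-sharing parameter $\lambda$ is the fraction of the available mean photon number $N_S$ dedicated to quantum communication in a trade-off code. *)

theory Defs
  imports Complex_Main
begin

definition g :: "real \<Rightarrow> real" where
  "g x = (x + 1) * ln (x + 1) - x * ln x"

definition g2 :: "real \<Rightarrow> real" where
  "g2 x = (x + 1) * log 2 (x + 1) - x * log 2 x"

end

theory Submission
  imports Defs
begin

text \<open>Since \<open>1/(x+1) \<le> ln (x+1) - ln x \<le> 1/x\<close>, writing
  \<open>g x = ln x + (x+1) (ln (x+1) - ln x)\<close> gives \<open>ln x + 1 \<le> g x \<le> ln x + 1 + 1/x\<close>.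
  Taking the lower bound at \<open>\<eta>N\<close> and the upper bound at \<open>(1-\<eta>)N\<close>, the constants cancel
  and only the error \<open>1/((1-\<eta>)N) \<le> 1/(\<eta>(1-\<eta>)N)\<close> remains. The statement in bits is the same one
  divided by \<open>ln 2\<close>, and \<open>\<lambda>\<close> is chosen precisely so that the error becomes \<open>\<epsilon>\<close>.\<close>

lemma ln_add_one_sub_ln_bounds:
  fixes x :: real
  assumes "0 < x"
  shows "1 / (x + 1) \<le> ln (x + 1) - ln x" "ln (x + 1) - ln x \<le> 1 / x"
proof -
  have "ln (x / (x + 1)) \<le> x / (x + 1) - 1"
    using assms by (intro ln_le_minus_one) auto
  then show "1 / (x + 1) \<le> ln (x + 1) - ln x"
    using assms by (simp add: ln_div field_simps)
  have "ln ((x + 1) / x) \<le> (x + 1) / x - 1"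
    using assms by (intro ln_le_minus_one) auto
  then show "ln (x + 1) - ln x \<le> 1 / x"
    using assms by (simp add: ln_div field_simps)
qed

lemma g_eq_ln_plus: "g x = ln x + (x + 1) * (ln (x + 1) - ln x)"
  unfolding g_def by (simp add: algebra_simps)

lemma g_bounds:
  fixes x :: real
  assumes "0 < x"
  shows "ln x + 1 \<le> g x" "g x \<le> ln x + 1 + 1 / x"
proof -
  have "(x + 1) * (1 / (x + 1)) \<le> (x + 1) * (ln (x + 1) - ln x)"
    using assms ln_add_one_sub_ln_bounds(1)[OF assms] by (intro mult_left_mono) auto
  then show "ln x + 1 \<le> g x"
    using assms by (simp add: g_eq_ln_plus)
  have "(x + 1) * (ln (x + 1) - ln x) \<le> (x + 1) * (1 / x)"
    using assms ln_add_one_sub_ln_bounds(2)[OF assms] by (intro mult_left_mono) auto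
  then show "g x \<le> ln x + 1 + 1 / x"
    using assms by (simp add: g_eq_ln_plus field_simps)
qed

lemma g_diff_ge:
  fixes a b :: real
  assumes "0 < a" "0 < b"
  shows "ln a - ln b - 1 / b \<le> g a - g b"
  using g_bounds(1)[OF assms(1)] g_bounds(2)[OF assms(2)] by linarith

lemma g_thermal_gap_ge:
  fixes \<eta> N :: real
  assumes "0 < \<eta>" "\<eta> < 1" "0 < N"
  shows "ln \<eta> - ln (1 - \<eta>) - 1 / (\<eta> * (1 - \<eta>) * N) \<le> g (\<eta> * N) - g ((1 - \<eta>) * N)"
proof -
  have "ln (\<eta> * N) - ln ((1 - \<eta>) * N) = ln \<eta> - ln (1 - \<eta>)"
    using assms by (simp add: ln_mult)
  moreover have "1 / ((1 - \<eta>) * N) \<le> 1 / (\<eta> * (1 - \<eta>) * N)"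
    using assms by (intro divide_left_mono) (auto simp: mult_le_cancel_right1)
  moreover have "ln (\<eta> * N) - ln ((1 - \<eta>) * N) - 1 / ((1 - \<eta>) * N)
      \<le> g (\<eta> * N) - g ((1 - \<eta>) * N)"
    using assms by (intro g_diff_ge) auto
  ultimately show ?thesis by linarith
qed

lemma g2_eq_g_div_ln2: "g2 x = g x / ln 2"
  unfolding g2_def g_def log_def by (simp add: field_simps)

lemma g2_thermal_gap_ge:
  fixes \<eta> N :: real
  assumes "0 < \<eta>" "\<eta> < 1" "0 < N"
  shows "log 2 \<eta> - log 2 (1 - \<eta>) - 1 / (\<eta> * (1 - \<eta>) * N * ln 2)
    \<le> g2 (\<eta> * N) - g2 ((1 - \<eta>) * N)"
proof -
  have "log 2 \<eta> - log 2 (1 - \<eta>) - 1 / (\<eta> * (1 - \<eta>) * N * ln 2)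
      = (ln \<eta> - ln (1 - \<eta>) - 1 / (\<eta> * (1 - \<eta>) * N)) / ln 2"
    by (simp add: log_def diff_divide_distrib)
  also have "\<dots> \<le> (g (\<eta> * N) - g ((1 - \<eta>) * N)) / ln 2"
    using g_thermal_gap_ge[OF assms] by (intro divide_right_mono) auto
  also have "\<dots> = g2 (\<eta> * N) - g2 ((1 - \<eta>) * N)"
    by (simp add: g2_eq_g_div_ln2 diff_divide_distrib)
  finally show ?thesis .
qed

theorem proposition3:
  shows "(\<forall>(\<eta>::real) (N::real). 1/2 \<le> \<eta> \<and> \<eta> < 1 \<and> 0 < N \<and> (1 - \<eta>) * N \<ge> 2 \<longrightarrow>
           g (\<eta> * N) - g ((1 - \<eta>) * N) \<ge> ln \<eta> - ln (1 - \<eta>) - 1 / (\<eta> * (1 - \<eta>) * N)) \<and>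
         (\<forall>(\<eta>::real) (N::real) (\<epsilon>::real) (lam::real).
           0 < \<eta> \<and> \<eta> < 1 \<and> 0 < N \<and> 0 < \<epsilon> \<and>
           lam = 1 / (\<eta> * (1 - \<eta>) * \<epsilon> * N * ln 2) \<and>
           lam * (1 - \<eta>) * N \<ge> 2 \<and> \<eta> \<ge> 1 - \<eta> \<longrightarrow>
           g2 (lam * \<eta> * N) - g2 (lam * (1 - \<eta>) * N) \<ge> log 2 \<eta> - log 2 (1 - \<eta>) - \<epsilon>)"
proof (intro conjI allI impI)
  fix \<eta> N :: real
  assume "1/2 \<le> \<eta> \<and> \<eta> < 1 \<and> 0 < N \<and> (1 - \<eta>) * N \<ge> 2"
  then show "g (\<eta> * N) - g ((1 - \<eta>) * N) \<ge> ln \<eta> - ln (1 - \<eta>) - 1 / (\<eta> * (1 - \<eta>) * N)"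
    by (intro g_thermal_gap_ge) auto
next
  fix \<eta> N \<epsilon> lam :: real
  assume h: "0 < \<eta> \<and> \<eta> < 1 \<and> 0 < N \<and> 0 < \<epsilon> \<and>
           lam = 1 / (\<eta> * (1 - \<eta>) * \<epsilon> * N * ln 2) \<and>
           lam * (1 - \<eta>) * N \<ge> 2 \<and> \<eta> \<ge> 1 - \<eta>"
  then have "0 < lam * N" by simp
  with h have "log 2 \<eta> - log 2 (1 - \<eta>) - 1 / (\<eta> * (1 - \<eta>) * (lam * N) * ln 2)
      \<le> g2 (\<eta> * (lam * N)) - g2 ((1 - \<eta>) * (lam * N))"
    by (intro g2_thermal_gap_ge) auto
  moreover have "1 / (\<eta> * (1 - \<eta>) * (lam * N) * ln 2) = \<epsilon>"
    using h by (simp add: field_simps)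
  ultimately show "g2 (lam * \<eta> * N) - g2 (lam * (1 - \<eta>) * N) \<ge> log 2 \<eta> - log 2 (1 - \<eta>) - \<epsilon>"
    by (simp add: ac_simps)
qed

end
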